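(* Let $\mathcal{A}$ be a graded algebra and $(C,d)$ a differential graded $\mathcal{A}$-module (an $\mathcal{A}$-differential space, $\mathcal{A}$ acting compatibly with $d$). Suppose $H_1\colon C\to C$ is an $\mathcal{A}$-equivariant homotopy operator between the identity and some $\mathcal{A}$-equivariant projection $\Pi_1\colon C\to C$ onto a differential subspace $C'\subset C$, i.e. $[d,H_1]=I-\Pi_1$, and suppose that a cochain map $\Pi\colon C\to C$ is another $\mathcal{A}$-equivariant projection onto $C'$. Then $H=(I-\Pi_1-\Pi)H_1(I-\Pi_1-\Pi)$ is an $\mathcal{A}$-equivariant homotopy between $I$ and $\Pi$, i.e. $[d,H]=I-\Pi$.
   Context: $[d,H]=dH+Hd$ for an odd operator $H$ (graded commutator). $\mathcal{A}$ carries the trivial differential. *)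

theory Defs
  imports Complex_Main
begin

definition lin_subspace :: "('k::field \<Rightarrow> 'v::ab_group_add \<Rightarrow> 'v) \<Rightarrow> 'v set \<Rightarrow> bool" where
  "lin_subspace s S \<longleftrightarrow> 0 \<in> S \<and> (\<forall>x\<in>S. \<forall>y\<in>S. x + y \<in> S) \<and> (\<forall>c. \<forall>x\<in>S. s c x \<in> S)"

definition graded_decomp :: "('k::field \<Rightarrow> 'v::ab_group_add \<Rightarrow> 'v) \<Rightarrow> (int \<Rightarrow> 'v set) \<Rightarrow> bool" where
  "graded_decomp s V \<longleftrightarrow> vector_space s \<and> (\<forall>n. lin_subspace s (V n)) \<and>
     (\<forall>x. \<exists>!f. finite {n. f n \<noteq> 0} \<and> (\<forall>n. f n \<in> V n) \<and> x = (\<Sum>n\<in>{n. f n \<noteq> 0}. f n))"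

definition graded_algebra :: "('k::field \<Rightarrow> 'a::ring \<Rightarrow> 'a) \<Rightarrow> (int \<Rightarrow> 'a set) \<Rightarrow> bool" where
  "graded_algebra sA Adeg \<longleftrightarrow> graded_decomp sA Adeg \<and>
     (\<forall>c a b. sA c (a * b) = sA c a * b \<and> sA c (a * b) = a * sA c b) \<and>
     (\<forall>p q a b. a \<in> Adeg p \<longrightarrow> b \<in> Adeg q \<longrightarrow> a * b \<in> Adeg (p + q))"

definition graded_action ::
  "('k::field \<Rightarrow> 'a::ring \<Rightarrow> 'a) \<Rightarrow> (int \<Rightarrow> 'a set) \<Rightarrow> ('k \<Rightarrow> 'c::ab_group_add \<Rightarrow> 'c) \<Rightarrow> (int \<Rightarrow> 'c set)
    \<Rightarrow> ('a \<Rightarrow> 'c \<Rightarrow> 'c) \<Rightarrow> bool" where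
  "graded_action sA Adeg sC Cdeg act \<longleftrightarrow> graded_algebra sA Adeg \<and> graded_decomp sC Cdeg \<and>
     (\<forall>a. Vector_Spaces.linear sC sC (act a)) \<and>
     (\<forall>x. Vector_Spaces.linear sA sC (\<lambda>a. act a x)) \<and>
     (\<forall>a b x. act (a * b) x = act a (act b x)) \<and>
     (\<forall>p n a x. a \<in> Adeg p \<longrightarrow> x \<in> Cdeg n \<longrightarrow> act a x \<in> Cdeg (n + p))"

definition homogeneous_op :: "('k::field \<Rightarrow> 'c::ab_group_add \<Rightarrow> 'c) \<Rightarrow> (int \<Rightarrow> 'c set) \<Rightarrow> ('c \<Rightarrow> 'c) \<Rightarrow> int \<Rightarrow> bool" where
  "homogeneous_op sC Cdeg T k \<longleftrightarrow> Vector_Spaces.linear sC sC T \<and> (\<forall>n x. x \<in> Cdeg n \<longrightarrow> T x \<in> Cdeg (n + k))"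

definition equivariant :: "(int \<Rightarrow> 'a set) \<Rightarrow> ('a \<Rightarrow> 'c::ab_group_add \<Rightarrow> 'c) \<Rightarrow> ('c \<Rightarrow> 'c) \<Rightarrow> int \<Rightarrow> bool" where
  "equivariant Adeg act T k \<longleftrightarrow>
     (\<forall>p a x. a \<in> Adeg p \<longrightarrow> T (act a x) = (if even (p * k) then act a (T x) else - act a (T x)))"

definition dg_module ::
  "('k::field \<Rightarrow> 'a::ring \<Rightarrow> 'a) \<Rightarrow> (int \<Rightarrow> 'a set) \<Rightarrow> ('k \<Rightarrow> 'c::ab_group_add \<Rightarrow> 'c) \<Rightarrow> (int \<Rightarrow> 'c set)
    \<Rightarrow> ('a \<Rightarrow> 'c \<Rightarrow> 'c) \<Rightarrow> ('c \<Rightarrow> 'c) \<Rightarrow> bool" where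
  "dg_module sA Adeg sC Cdeg act d \<longleftrightarrow> graded_action sA Adeg sC Cdeg act \<and>
     homogeneous_op sC Cdeg d 1 \<and> (\<forall>x. d (d x) = 0) \<and> equivariant Adeg act d 1"

definition differential_subspace :: "('k::field \<Rightarrow> 'c::ab_group_add \<Rightarrow> 'c) \<Rightarrow> ('c \<Rightarrow> 'c) \<Rightarrow> 'c set \<Rightarrow> bool" where
  "differential_subspace sC d C' \<longleftrightarrow> lin_subspace sC C' \<and> d ` C' \<subseteq> C'"

definition projection_onto :: "('c \<Rightarrow> 'c) \<Rightarrow> 'c set \<Rightarrow> bool" where
  "projection_onto P C' \<longleftrightarrow> (\<forall>x. P (P x) = P x) \<and> range P = C'"

end

theory Submission
  imports Defs
begin

text \<open>Put \<open>Q = I - \<Pi>1 - \<Pi>\<close>, so that \<open>H = Q H1 Q\<close>. Since \<open>\<Pi>1 = I - [d,H1]\<close>, it is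
  linear of degree 0 and commutes with \<open>d\<close>; hence \<open>Q\<close> is an equivariant degree 0 chain map,
  \<open>H\<close> is equivariant of degree -1, and \<open>[d,H] = Q [d,H1] Q = Q (I - \<Pi>1) Q\<close>. Two idempotents
  with the same image absorb each other (\<open>\<Pi>1 \<Pi> = \<Pi>\<close>, \<open>\<Pi> \<Pi>1 = \<Pi>1\<close>), which gives
  \<open>(I - \<Pi>1) Q = I - \<Pi>1\<close> and \<open>Q (I - \<Pi>1) = I - \<Pi>\<close>.\<close>

lemma linear_additive:
  assumes "Vector_Spaces.linear s1 s2 f"
  shows "additive f"
  using assms by (simp add: additive_def Vector_Spaces.linear_iff)

lemma homogeneous_op_additive:
  assumes "homogeneous_op s V T k"
  shows "additive T"
  using assms linear_additive by (auto simp: homogeneous_op_def)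

lemma lin_subspace_diff:
  assumes "vector_space s" "lin_subspace s S" "x \<in> S" "y \<in> S"
  shows "x - y \<in> S"
proof -
  have "module.subspace s S"
    using assms(1,2) by (simp add: lin_subspace_def module.subspace_def module_iff_vector_space)
  then show ?thesis
    using assms module.subspace_diff[of s S x y] by (simp add: module_iff_vector_space)
qed

lemma homogeneous_op_id:
  assumes "vector_space s"
  shows "homogeneous_op s V id 0"
  using assms by (simp add: homogeneous_op_def vector_space.linear_id)

lemma homogeneous_op_diff:
  assumes "graded_decomp s V" "homogeneous_op s V T k" "homogeneous_op s V S k"
  shows "homogeneous_op s V (\<lambda>x. T x - S x) k"
proof -
  have vs: "vector_space s" and sub: "\<And>n. lin_subspace s (V n)"
    using assms(1) by (auto simp: graded_decomp_def)
  then have "Vector_Spaces.linear s s (\<lambda>x. T x - S x)"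
    using assms(2,3) by (simp add: homogeneous_op_def vector_space_pair.linear_compose_sub
        vector_space_pair_def)
  then show ?thesis
    using assms(2,3) lin_subspace_diff[OF vs sub] by (simp add: homogeneous_op_def)
qed

lemma homogeneous_op_comp:
  assumes "homogeneous_op s V T k" "homogeneous_op s V S l"
  shows "homogeneous_op s V (T \<circ> S) (k + l)"
  using assms unfolding homogeneous_op_def
  by (metis Vector_Spaces.linear_compose add.commute add.left_commute comp_apply)

lemma equivariant_id: "equivariant Adeg act id 0"
  by (simp add: equivariant_def)

lemma equivariant_diff:
  assumes "\<And>a. additive (act a)" "equivariant Adeg act T k" "equivariant Adeg act S k"
  shows "equivariant Adeg act (\<lambda>x. T x - S x) k"
  using assms by (simp add: equivariant_def additive.diff)

lemma equivariant_comp: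
  assumes "\<And>a. additive (act a)" "additive T"
    and "equivariant Adeg act T k" "equivariant Adeg act S l"
  shows "equivariant Adeg act (T \<circ> S) (k + l)"
  using assms by (simp add: equivariant_def additive.minus distrib_left)

lemma projection_onto_absorb:
  assumes "projection_onto P S" "projection_onto P' S"
  shows "P (P' x) = P' x"
proof -
  obtain z where "P' x = P z"
    using assms unfolding projection_onto_def by (metis rangeE rangeI)
  then show ?thesis
    using assms(1) unfolding projection_onto_def by simp
qed

lemma homotopy_proj_eq:
  fixes d H P :: "'c::ab_group_add \<Rightarrow> 'c"
  assumes "\<forall>x. d (H x) + H (d x) = x - P x"
  shows "P = (\<lambda>x. x - d (H x) - H (d x))"
proof
  fix x
  have "P x = x - (x - P x)"
    by simp
  then show "P x = x - d (H x) - H (d x)"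
    using assms by (simp add: diff_diff_eq)
qed

lemma homotopy_proj_homogeneous:
  assumes "graded_decomp s V" "homogeneous_op s V d k" "homogeneous_op s V H (- k)"
    and "\<forall>x. d (H x) + H (d x) = x - P x"
  shows "homogeneous_op s V P 0"
proof -
  have "vector_space s"
    using assms(1) by (simp add: graded_decomp_def)
  moreover have "homogeneous_op s V (d \<circ> H) 0" "homogeneous_op s V (H \<circ> d) 0"
    using homogeneous_op_comp[OF assms(2,3)] homogeneous_op_comp[OF assms(3,2)] by simp_all
  ultimately have "homogeneous_op s V (\<lambda>x. id x - (d \<circ> H) x - (H \<circ> d) x) 0"
    by (intro homogeneous_op_diff[OF assms(1)] homogeneous_op_id)
  then show ?thesis
    using homotopy_proj_eq[OF assms(4)] by simp
qed

lemma homotopy_proj_commute: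
  assumes "additive d" "additive H" "\<And>x. d (d x) = 0"
    and "\<forall>x. d (H x) + H (d x) = x - P x"
  shows "d (P x) = P (d x)"
  using assms by (simp add: homotopy_proj_eq[OF assms(4)] additive.diff additive.zero)

lemma conjugated_homotopy:
  assumes "\<forall>x. d (H x) + H (d x) = x - P x" "additive Q" "\<And>x. d (Q x) = Q (d x)"
  shows "d (Q (H (Q x))) + Q (H (Q (d x))) = Q (Q x - P (Q x))"
  using assms by (metis additive.add)

lemma projection_pair_identity:
  fixes P1 P Q :: "'c::ab_group_add \<Rightarrow> 'c"
  assumes "additive P1" "additive P"
    and "\<And>x. P1 (P1 x) = P1 x" "\<And>x. P (P1 x) = P1 x" "\<And>x. P1 (P x) = P x"
    and "Q = (\<lambda>x. x - P1 x - P x)"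
  shows "Q (Q x - P1 (Q x)) = x - P x"
  using assms by (simp add: additive.diff)

lemma homotopy_transfer:
  fixes d H1 P1 P Q :: "'c::ab_group_add \<Rightarrow> 'c"
  assumes "additive d" "additive H1" "additive P1" "additive P" "\<And>x. d (d x) = 0"
    and homot: "\<forall>x. d (H1 x) + H1 (d x) = x - P1 x"
    and P_chain: "\<And>x. d (P x) = P (d x)"
    and "\<And>x. P1 (P1 x) = P1 x" "\<And>x. P (P1 x) = P1 x" "\<And>x. P1 (P x) = P x"
    and Q_def: "Q = (\<lambda>x. x - P1 x - P x)"
  shows "d (Q (H1 (Q x))) + Q (H1 (Q (d x))) = x - P x"
proof -
  have "additive Q"
    using assms(3,4) by (simp add: Q_def additive_def algebra_simps)
  moreover have "d (Q x) = Q (d x)" for x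
    using homotopy_proj_commute[OF assms(1,2,5) homot] P_chain
    by (simp add: Q_def additive.diff[OF assms(1)])
  ultimately have "d (Q (H1 (Q x))) + Q (H1 (Q (d x))) = Q (Q x - P1 (Q x))"
    by (rule conjugated_homotopy[OF homot])
  also have "\<dots> = x - P x"
    using assms(3,4,8-) by (rule projection_pair_identity)
  finally show ?thesis .
qed

theorem lemma5p6:
  fixes sA :: "'k::field \<Rightarrow> 'a::ring \<Rightarrow> 'a" and Adeg :: "int \<Rightarrow> 'a set"
    and sC :: "'k \<Rightarrow> 'c::ab_group_add \<Rightarrow> 'c" and Cdeg :: "int \<Rightarrow> 'c set"
    and act :: "'a \<Rightarrow> 'c \<Rightarrow> 'c" and d H1 \<Pi>1 \<Pi> :: "'c \<Rightarrow> 'c" and C' :: "'c set"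
  assumes dg: "dg_module sA Adeg sC Cdeg act d"
    and sub: "differential_subspace sC d C'"
    and H1_op: "homogeneous_op sC Cdeg H1 (-1)"
    and H1_eq: "equivariant Adeg act H1 (-1)"
    and P1_eq: "equivariant Adeg act \<Pi>1 0"
    and P1_proj: "projection_onto \<Pi>1 C'"
    and homot: "\<forall>x. d (H1 x) + H1 (d x) = x - \<Pi>1 x"
    and P_op: "homogeneous_op sC Cdeg \<Pi> 0"
    and P_chain: "\<forall>x. d (\<Pi> x) = \<Pi> (d x)"
    and P_eq: "equivariant Adeg act \<Pi> 0"
    and P_proj: "projection_onto \<Pi> C'"
  defines "H \<equiv> (\<lambda>x. let y = H1 (x - \<Pi>1 x - \<Pi> x) in y - \<Pi>1 y - \<Pi> y)"
  shows "homogeneous_op sC Cdeg H (-1) \<and> equivariant Adeg act H (-1) \<and>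
         (\<forall>x. d (H x) + H (d x) = x - \<Pi> x)"
proof -
  have ga: "graded_action sA Adeg sC Cdeg act" and d_op: "homogeneous_op sC Cdeg d 1"
    and dd: "\<And>x. d (d x) = 0"
    using dg by (auto simp: dg_module_def)
  have gd: "graded_decomp sC Cdeg" and act_add: "\<And>a. additive (act a)"
    using ga linear_additive by (auto simp: graded_action_def)
  have P1_op: "homogeneous_op sC Cdeg \<Pi>1 0"
    using homotopy_proj_homogeneous[of sC Cdeg d 1 H1] gd d_op H1_op homot by simp
  define Q where "Q = (\<lambda>x. x - \<Pi>1 x - \<Pi> x)"
  have Q_op: "homogeneous_op sC Cdeg Q 0"
    using homogeneous_op_diff[OF gd homogeneous_op_diff[OF gd homogeneous_op_id P1_op] P_op] gd
    by (simp add: Q_def graded_decomp_def)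
  have Q_eq: "equivariant Adeg act Q 0"
    using equivariant_diff[OF act_add equivariant_diff[OF act_add equivariant_id P1_eq] P_eq]
    by (simp add: Q_def)
  have H_conj: "H = Q \<circ> (H1 \<circ> Q)"
    by (simp add: H_def Q_def fun_eq_iff Let_def)
  have "homogeneous_op sC Cdeg H (-1)"
    using homogeneous_op_comp[OF Q_op homogeneous_op_comp[OF H1_op Q_op]] by (simp add: H_conj)
  moreover have "equivariant Adeg act H (-1)"
    using equivariant_comp[OF act_add homogeneous_op_additive[OF Q_op] Q_eq
        equivariant_comp[OF act_add homogeneous_op_additive[OF H1_op] H1_eq Q_eq]]
    by (simp add: H_conj)
  moreover have "d (H x) + H (d x) = x - \<Pi> x" for x
  proof -
    have "\<Pi>1 (\<Pi>1 y) = \<Pi>1 y" "\<Pi> (\<Pi>1 y) = \<Pi>1 y" "\<Pi>1 (\<Pi> y) = \<Pi> y" for y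
      using P1_proj P_proj by (auto simp: projection_onto_def intro: projection_onto_absorb)
    then show ?thesis
      using homotopy_transfer[OF _ _ _ _ dd homot _ _ _ _ Q_def] P_chain d_op H1_op P1_op P_op
      by (simp add: H_conj homogeneous_op_additive)
  qed
  ultimately show ?thesis
    by blast
qed

end
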